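(* Let $X,Y$ be Banach spaces over $\mathbb{K}\in\{\mathbb{R},\mathbb{C}\}$ and let $G\in L(X,Y)$ with $\|G\|=1$. If $n_G^{(2)}(X,Y)=1$, then $n_G^{(1)}(X,Y)= n_G(X,Y)$.
   Context: For $T\in L(X,Y)$: $\|T\|_G := \inf_{\delta>0}\sup\{\|Tx\|: x\in S_X,\ \|Gx\|>1-\delta\}$ ($S_X$ the unit sphere); $V_G(T):=\bigcap_{\delta>0}\overline{\{y^*(Tx): x\in S_X,\ y^*\in S_{Y^*},\ \operatorname{Re} y^*(Gx)>1-\delta\}}$, $\nu_G(T):=\max\{|\lambda|:\lambda\in V_G(T)\}$. The numerical indices are $n_G(X,Y):=\inf\{\nu_G(T):\|T\|=1\}=\max\{k\ge0: k\|T\|\le\nu_G(T)\ \forall T\}$, $n_G^{(1)}(X,Y):=\inf\{\|T\|_G:\|T\|=1\}=\max\{k\ge0: k\|T\|\le\|T\|_G\ \forall T\}$, $n_G^{(2)}(X,Y):=\inf\{\nu_G(T):\|T\|_G=1\}=\max\{k\ge0: k\|T\|_G\le\nu_G(T)\ \forall T\}$, all over $T\in L(X,Y)$. Standing assumption of the paper: $\|\cdot\|_G$ is a norm on $L(X,Y)$. *)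

theory Defs
  imports "HOL-Analysis.Analysis"
begin

text \<open>
Scalars K in {R, C} are handled uniformly by a flag cplx.  A Banach space
over K is a real Banach space (type class banach); if cplx holds it carries a
complex structure J (multiplication by the imaginary unit), compatible with
the norm: norm ((a + i b) x) = |a + i b| norm x.
\<close>

definition scalar_structure :: "bool \<Rightarrow> ('a::real_normed_vector \<Rightarrow> 'a) \<Rightarrow> bool" where
  "scalar_structure cplx J \<longleftrightarrow>
     (cplx \<longrightarrow> linear J \<and> (\<forall>x. J (J x) = - x) \<and>
        (\<forall>a b x. norm (a *\<^sub>R x + b *\<^sub>R J x) = cmod (Complex a b) * norm x))"

definition kop :: "bool \<Rightarrow> ('a::real_normed_vector \<Rightarrow> 'a) \<Rightarrow> ('b::real_normed_vector \<Rightarrow> 'b)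
    \<Rightarrow> ('a \<Rightarrow> 'b) \<Rightarrow> bool" where
  "kop cplx JX JY T \<longleftrightarrow> bounded_linear T \<and> (cplx \<longrightarrow> (\<forall>x. T (JX x) = JY (T x)))"

text \<open>Y*: bounded K-linear functionals, as complex-valued maps
 (real-valued in the real case).\<close>
definition kfun :: "bool \<Rightarrow> ('b::real_normed_vector \<Rightarrow> 'b) \<Rightarrow> ('b \<Rightarrow> complex) \<Rightarrow> bool" where
  "kfun cplx J f \<longleftrightarrow> bounded_linear f \<and>
     (if cplx then (\<forall>y. f (J y) = \<i> * f y) else (\<forall>y. Im (f y) = 0))"

definition dual_sphere :: "bool \<Rightarrow> ('b::real_normed_vector \<Rightarrow> 'b) \<Rightarrow> ('b \<Rightarrow> complex) set" where
  "dual_sphere cplx J = {f. kfun cplx J f \<and> onorm f = 1}"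

definition Gnorm :: "('a::real_normed_vector \<Rightarrow> 'b::real_normed_vector) \<Rightarrow> ('a \<Rightarrow> 'b) \<Rightarrow> real" where
  "Gnorm G T = (INF \<delta>\<in>{0<..}. SUP x\<in>{x. norm x = 1 \<and> norm (G x) > 1 - \<delta>}. norm (T x))"

definition Vrange :: "bool \<Rightarrow> ('b::real_normed_vector \<Rightarrow> 'b) \<Rightarrow> ('a::real_normed_vector \<Rightarrow> 'b)
    \<Rightarrow> ('a \<Rightarrow> 'b) \<Rightarrow> complex set" where
  "Vrange cplx JY G T = (\<Inter>\<delta>\<in>{0<..}. closure
     {f (T x) | x f. norm x = 1 \<and> f \<in> dual_sphere cplx JY \<and> Re (f (G x)) > 1 - \<delta>})"

text \<open>Numerical radius (the maximum is attained, so it equals the supremum).\<close>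
definition nradius :: "bool \<Rightarrow> ('b::real_normed_vector \<Rightarrow> 'b) \<Rightarrow> ('a::real_normed_vector \<Rightarrow> 'b)
    \<Rightarrow> ('a \<Rightarrow> 'b) \<Rightarrow> real" where
  "nradius cplx JY G T = Sup (cmod ` Vrange cplx JY G T)"

definition nG :: "bool \<Rightarrow> ('a::real_normed_vector \<Rightarrow> 'a) \<Rightarrow> ('b::real_normed_vector \<Rightarrow> 'b)
    \<Rightarrow> ('a \<Rightarrow> 'b) \<Rightarrow> real" where
  "nG cplx JX JY G = Inf {nradius cplx JY G T | T. kop cplx JX JY T \<and> onorm T = 1}"

definition nG1 :: "bool \<Rightarrow> ('a::real_normed_vector \<Rightarrow> 'a) \<Rightarrow> ('b::real_normed_vector \<Rightarrow> 'b)
    \<Rightarrow> ('a \<Rightarrow> 'b) \<Rightarrow> real" where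
  "nG1 cplx JX JY G = Inf {Gnorm G T | T. kop cplx JX JY T \<and> onorm T = 1}"

definition nG2 :: "bool \<Rightarrow> ('a::real_normed_vector \<Rightarrow> 'a) \<Rightarrow> ('b::real_normed_vector \<Rightarrow> 'b)
    \<Rightarrow> ('a \<Rightarrow> 'b) \<Rightarrow> real" where
  "nG2 cplx JX JY G = Inf {nradius cplx JY G T | T. kop cplx JX JY T \<and> Gnorm G T = 1}"

definition Gnorm_is_norm :: "bool \<Rightarrow> ('a::real_normed_vector \<Rightarrow> 'a) \<Rightarrow> ('b::real_normed_vector \<Rightarrow> 'b)
    \<Rightarrow> ('a \<Rightarrow> 'b) \<Rightarrow> bool" where
  "Gnorm_is_norm cplx JX JY G \<longleftrightarrow>
     (\<forall>T. kop cplx JX JY T \<longrightarrow> 0 \<le> Gnorm G T \<and> (Gnorm G T = 0 \<longleftrightarrow> T = (\<lambda>x. 0))) \<and>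
     (\<forall>T S. kop cplx JX JY T \<and> kop cplx JX JY S \<longrightarrow>
         Gnorm G (\<lambda>x. T x + S x) \<le> Gnorm G T + Gnorm G S) \<and>
     (\<forall>T c. kop cplx JX JY T \<longrightarrow> Gnorm G (\<lambda>x. c *\<^sub>R T x) = \<bar>c\<bar> * Gnorm G T) \<and>
     (\<forall>T a b. cplx \<and> kop cplx JX JY T \<longrightarrow>
         Gnorm G (\<lambda>x. a *\<^sub>R T x + b *\<^sub>R JY (T x)) = cmod (Complex a b) * Gnorm G T)"

end

theory Submission
  imports Defs
begin

text \<open>
The G-numerical radius never exceeds the G-norm, and both are positively homogeneous.
Normalising ||T||_G = 1, the definition of n_G^(2) as an infimum gives
n_G^(2) ||T||_G <= nu_G(T) for every T, so n_G^(2) = 1 forces nu_G(T) = ||T||_G,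
and the infima defining n_G and n_G^(1) range over the same set of numbers.
The analytic input is that V_G(T) is nonempty: norming functionals (Hahn-Banach, via
Zorn's lemma on graphs of norm-dominated partial functionals) of vectors G x with
||G x|| close to 1 produce points of the nested, bounded approximating sets, whose
closures then have a common point.
\<close>

definition norm_dominated_graph :: "('a::real_normed_vector \<times> real) set \<Rightarrow> bool" where
  "norm_dominated_graph H \<longleftrightarrow> subspace H \<and> (\<forall>(v, a)\<in>H. a \<le> norm v)"

lemma norm_dominated_graphD:
  assumes "norm_dominated_graph H"
  shows "subspace H" and "(v, a) \<in> H \<Longrightarrow> a \<le> norm v"
  using assms unfolding norm_dominated_graph_def by auto

lemma norm_dominated_graph_unique:
  assumes H: "norm_dominated_graph H" and "(v, a) \<in> H" "(v, b) \<in> H"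
  shows "a = b"
proof -
  have "(0, a - b) \<in> H" and "(0, b - a) \<in> H"
    using subspace_diff[OF norm_dominated_graphD(1)[OF H]] assms(2,3) by force+
  then have "a - b \<le> 0" and "b - a \<le> 0"
    using norm_dominated_graphD(2)[OF H] by fastforce+
  then show ?thesis by simp
qed

lemma subspace_Union_chain:
  assumes "\<C> \<noteq> {}" "\<And>S. S \<in> \<C> \<Longrightarrow> subspace S"
    and chain: "\<And>S T. S \<in> \<C> \<Longrightarrow> T \<in> \<C> \<Longrightarrow> S \<subseteq> T \<or> T \<subseteq> S"
  shows "subspace (\<Union>\<C>)"
  unfolding subspace_def
proof (intro conjI ballI allI)
  show "0 \<in> \<Union>\<C>" using assms(1,2) subspace_0 by blast
next
  fix x y assume "x \<in> \<Union>\<C>" "y \<in> \<Union>\<C>"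
  then obtain S where "S \<in> \<C>" "x \<in> S" "y \<in> S" using chain by blast
  then show "x + y \<in> \<Union>\<C>" using assms(2) subspace_add by blast
next
  fix c x assume "x \<in> \<Union>\<C>"
  then show "c *\<^sub>R x \<in> \<Union>\<C>" using assms(2) subspace_scale by blast
qed

lemma norm_dominated_graph_extend_pos:
  assumes H: "norm_dominated_graph H"
    and upper: "\<And>u a. (u, a) \<in> H \<Longrightarrow> c \<le> norm (u + z) - a"
    and va: "(v, a) \<in> H" and t: "t > 0"
  shows "a + t * c \<le> norm (v + t *\<^sub>R z)"
proof -
  have "(inverse t *\<^sub>R v, inverse t * a) \<in> H"
    using subspace_scale[OF norm_dominated_graphD(1)[OF H] va, of "inverse t"] by simp
  from upper[OF this] have "t * c \<le> t * (norm (inverse t *\<^sub>R v + z) - inverse t * a)"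
    using t by (intro mult_left_mono) auto
  moreover have "t * norm (inverse t *\<^sub>R v + z) = norm (v + t *\<^sub>R z)"
  proof -
    have "v + t *\<^sub>R z = t *\<^sub>R (inverse t *\<^sub>R v + z)"
      using t by (simp add: algebra_simps)
    then show ?thesis using t by simp
  qed
  ultimately show ?thesis using t by (simp add: right_diff_distrib mult.assoc[symmetric])
qed

lemma norm_dominated_graph_extend:
  assumes H: "norm_dominated_graph H"
  obtains c where "norm_dominated_graph {h + k | h k. h \<in> H \<and> k \<in> span {(z, c)}}"
proof -
  note sub = norm_dominated_graphD(1)[OF H] and dom = norm_dominated_graphD(2)[OF H]
  have sep: "a - norm (u - z) \<le> norm (w + z) - b" if "(u, a) \<in> H" "(w, b) \<in> H" for u a w b
  proof -
    have "a + b \<le> norm (u + w)" using dom subspace_add[OF sub that] by simp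
    also have "\<dots> \<le> norm (u - z) + norm (w + z)" using norm_triangle_ineq[of "u - z" "w + z"] by simp
    finally show ?thesis by simp
  qed
  \<comment> \<open>any c between the two sides of sep extends the functional to z\<close>
  define S where "S = {a - norm (u - z) | u a. (u, a) \<in> H}"
  define c where "c = Sup S"
  have "(0, 0) \<in> H" using subspace_0[OF sub] by (simp add: zero_prod_def)
  then have "S \<noteq> {}" and "bdd_above S"
    unfolding S_def bdd_above_def using sep by fastforce+
  then have lower: "a - norm (u - z) \<le> c" and upper: "c \<le> norm (u + z) - a" if "(u, a) \<in> H" for u a
    unfolding c_def using that sep by (auto intro!: cSup_upper cSup_least simp: S_def)
  have "a + t * c \<le> norm (v + t *\<^sub>R z)" if "(v, a) \<in> H" for v a t
  proof (cases t "0::real" rule: linorder_cases)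
    case less
    have "- c \<le> norm (u + - z) - a" if "(u, a) \<in> H" for u a
      using lower[OF that] by simp
    from norm_dominated_graph_extend_pos[OF H this \<open>(v, a) \<in> H\<close>, of "- t"] less
    show ?thesis by simp
  next
    case equal
    then show ?thesis using dom that by simp
  next
    case greater
    show ?thesis using norm_dominated_graph_extend_pos[OF H upper \<open>(v, a) \<in> H\<close> greater] by simp
  qed
  then have "norm_dominated_graph {h + k | h k. h \<in> H \<and> k \<in> span {(z, c)}}"
    unfolding norm_dominated_graph_def span_singleton
    using subspace_sums[OF sub subspace_span[of "{(z, c)}"]] by (auto simp: span_singleton)
  then show ?thesis by (rule that)
qed

lemma norm_dominated_graph_total_linear:
  fixes M :: "('a::real_normed_vector \<times> real) set"
  assumes M: "norm_dominated_graph M" and total: "\<And>z. \<exists>a. (z, a) \<in> M"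
  obtains g :: "'a \<Rightarrow> real"
  where "linear g" "\<And>v. \<bar>g v\<bar> \<le> norm v" "\<And>z a. (z, a) \<in> M \<Longrightarrow> g z = a"
proof -
  note sub = norm_dominated_graphD(1)[OF M]
  obtain g where g: "\<And>z. (z, g z) \<in> M" using total by metis
  have g_eq: "g z = a" if "(z, a) \<in> M" for z a
    using norm_dominated_graph_unique[OF M g that] .
  have "linear g"
  proof (rule linearI)
    show "g (v + w) = g v + g w" for v w using g_eq subspace_add[OF sub g g] by simp
    show "g (r *\<^sub>R v) = r *\<^sub>R g v" for r v using g_eq subspace_scale[OF sub g] by simp
  qed
  moreover have "\<bar>g v\<bar> \<le> norm v" for v
  proof -
    have "(- v, - g v) \<in> M" using subspace_neg[OF sub g[of v]] by simp
    then have "- g v \<le> norm (- v)" and "g v \<le> norm v"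
      using norm_dominated_graphD(2)[OF M] g[of v] by blast+
    then show ?thesis by simp
  qed
  ultimately show ?thesis using that g_eq by blast
qed

lemma exists_norming_real_functional:
  fixes y :: "'a::real_normed_vector"
  obtains g :: "'a \<Rightarrow> real" where "linear g" "\<And>v. \<bar>g v\<bar> \<le> norm v" "g y = norm y"
proof -
  define \<A> where "\<A> = {H. norm_dominated_graph H \<and> (y, norm y) \<in> H}"
  have "\<forall>(v, a)\<in>span {(y, norm y)}. a \<le> norm v"
    by (auto simp: span_singleton abs_mult mult_right_mono)
  then have "span {(y, norm y)} \<in> \<A>"
    unfolding \<A>_def norm_dominated_graph_def by (auto intro: span_base)
  then have "\<A> \<noteq> {}" by blast
  moreover have "\<Union>\<C> \<in> \<A>" if "\<C> \<noteq> {}" "subset.chain \<A> \<C>" for \<C>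
  proof -
    have "subspace (\<Union>\<C>)"
      using that unfolding subset_chain_def \<A>_def norm_dominated_graph_def
      by (intro subspace_Union_chain) auto
    then show ?thesis
      using that unfolding subset_chain_def \<A>_def norm_dominated_graph_def by fast
  qed
  ultimately obtain M where M: "M \<in> \<A>" and max: "\<And>X. X \<in> \<A> \<Longrightarrow> M \<subseteq> X \<Longrightarrow> X = M"
    using subset_Zorn_nonempty[of \<A>] by blast
  have MH: "norm_dominated_graph M" and yM: "(y, norm y) \<in> M" using M unfolding \<A>_def by auto
  have "\<exists>a. (z, a) \<in> M" for z
  proof -
    obtain c where ext: "norm_dominated_graph {h + k | h k. h \<in> M \<and> k \<in> span {(z, c)}}"
      (is "norm_dominated_graph ?M'") using norm_dominated_graph_extend[OF MH] .
    have "m \<in> ?M'" if "m \<in> M" for m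
      using that span_zero[of "{(z, c)}"] by (metis (mono_tags, lifting) add.right_neutral mem_Collect_eq)
    then have "?M' = M" using max ext yM unfolding \<A>_def by blast
    moreover have "(z, c) \<in> ?M'"
      using subspace_0[OF norm_dominated_graphD(1)[OF MH]] span_base[of "(z, c)" "{(z, c)}"]
      by (metis (mono_tags, lifting) add_0 insertI1 mem_Collect_eq)
    ultimately show ?thesis by blast
  qed
  then obtain g :: "'a \<Rightarrow> real" where "linear g" "\<And>v. \<bar>g v\<bar> \<le> norm v" "g y = norm y"
    using norm_dominated_graph_total_linear[OF MH] yM by metis
  then show ?thesis by (rule that)
qed

lemma complexified_functional:
  fixes J :: "'a::real_normed_vector \<Rightarrow> 'a" and g :: "'a \<Rightarrow> real"
  assumes J: "scalar_structure True J" and g: "linear g" "\<And>v. \<bar>g v\<bar> \<le> norm v"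
  defines "f \<equiv> \<lambda>v. Complex (g v) (- g (J v))"
  shows "kfun True J f" and "norm (f v) \<le> norm v"
proof -
  have J_lin: "linear J" and JJ: "\<And>x. J (J x) = - x"
    and J_norm: "\<And>a b x. norm (a *\<^sub>R x + b *\<^sub>R J x) = cmod (Complex a b) * norm x"
    using J unfolding scalar_structure_def by auto
  have f_lin: "linear f"
    by (rule linearI) (simp_all add: f_def linear_add[OF J_lin] linear_scale[OF J_lin]
        linear_add[OF g(1)] linear_scale[OF g(1)] complex_eq_iff)
  have fJ: "f (J v) = \<i> * f v" for v
    by (simp add: f_def JJ linear_neg[OF g(1)] complex_eq_iff)
  have f_norm: "norm (f v) \<le> norm v" for v
  proof (cases "f v = 0")
    case False
    \<comment> \<open>rotate v so that f takes the real value norm (f v) there\<close>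
    define u where "u = cnj (f v) / cmod (f v)"
    define w where "w = Re u *\<^sub>R v + Im u *\<^sub>R J v"
    have "f w = u * f v"
      by (simp add: w_def linear_add[OF f_lin] linear_scale[OF f_lin] fJ complex_eq_iff algebra_simps)
    also have "\<dots> = cnj (f v) * f v / cmod (f v)" by (simp add: u_def)
    also have "\<dots> = cmod (f v)"
      using False by (simp flip: complex_norm_square add: mult.commute power2_eq_square)
    finally have "g w = cmod (f v)" by (simp add: f_def complex_eq_iff)
    moreover have "norm w = cmod u * norm v" by (simp add: w_def J_norm)
    moreover have "cmod u = 1" using False by (simp add: u_def norm_divide)
    ultimately show ?thesis using g(2)[of w] by simp
  qed simp
  show "norm (f v) \<le> norm v" by (rule f_norm)
  have "bounded_linear f"
    using f_lin f_norm by (intro bounded_linear_intro[of _ 1]) (auto simp: linear_add linear_scale)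
  then show "kfun True J f" unfolding kfun_def using fJ by simp
qed

lemma dual_sphereI:
  assumes f: "kfun cplx J f" and f_norm: "\<And>v. norm (f v) \<le> norm v"
    and y: "y \<noteq> 0" "Re (f y) = norm y"
  shows "f \<in> dual_sphere cplx J"
proof -
  have bl: "bounded_linear f" using f unfolding kfun_def by simp
  have "onorm f \<le> 1" by (rule onorm_bound) (simp_all add: f_norm)
  moreover have "1 \<le> norm (f y) / norm y"
    using complex_Re_le_cmod[of "f y"] y by simp
  then have "1 \<le> onorm f" using le_onorm[OF bl, of y] by linarith
  ultimately show ?thesis unfolding dual_sphere_def using f by simp
qed

lemma exists_norming_functional:
  fixes J :: "'a::real_normed_vector \<Rightarrow> 'a" and y :: 'a
  assumes J: "scalar_structure cplx J" and y: "y \<noteq> 0"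
  shows "\<exists>f\<in>dual_sphere cplx J. Re (f y) = norm y"
proof -
  obtain g :: "'a \<Rightarrow> real" where g: "linear g" "\<And>v. \<bar>g v\<bar> \<le> norm v" and gy: "g y = norm y"
    using exists_norming_real_functional[of y] by blast
  show ?thesis
  proof (cases cplx)
    case False
    have "bounded_linear (\<lambda>v. complex_of_real (g v))"
      using g by (intro bounded_linear_intro[of _ 1])
        (auto simp: linear_add linear_scale scaleR_conv_of_real)
    then have "kfun cplx J (\<lambda>v. complex_of_real (g v))" unfolding kfun_def using False by simp
    then show ?thesis using dual_sphereI g(2) y gy by force
  next
    case True
    then show ?thesis using complexified_functional[OF _ g] J y gy
      by (intro bexI[of _ "\<lambda>v. Complex (g v) (- g (J v))"] dual_sphereI) auto
  qed
qed

definition Vrange_approx :: "bool \<Rightarrow> ('b::real_normed_vector \<Rightarrow> 'b) \<Rightarrow> ('a::real_normed_vector \<Rightarrow> 'b)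
    \<Rightarrow> ('a \<Rightarrow> 'b) \<Rightarrow> real \<Rightarrow> complex set" where
  "Vrange_approx cplx JY G T \<delta> =
     {f (T x) | x f. norm x = 1 \<and> f \<in> dual_sphere cplx JY \<and> Re (f (G x)) > 1 - \<delta>}"

lemma Vrange_eq_Inter_approx:
  "Vrange cplx JY G T = (\<Inter>\<delta>\<in>{0<..}. closure (Vrange_approx cplx JY G T \<delta>))"
  unfolding Vrange_def Vrange_approx_def by simp

lemma Vrange_approx_mono:
  "\<delta> \<le> \<delta>' \<Longrightarrow> Vrange_approx cplx JY G T \<delta> \<subseteq> Vrange_approx cplx JY G T \<delta>'"
  unfolding Vrange_approx_def by force

lemma dual_sphere_bounded_linear: "f \<in> dual_sphere cplx J \<Longrightarrow> bounded_linear f"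
  unfolding dual_sphere_def kfun_def by auto

lemma dual_sphere_norm_le: "f \<in> dual_sphere cplx J \<Longrightarrow> norm (f v) \<le> norm v"
  using onorm[of f v] unfolding dual_sphere_def kfun_def by auto

lemma Vrange_approxE:
  assumes "z \<in> Vrange_approx cplx JY G T \<delta>"
  obtains x where "norm x = 1" "norm (G x) > 1 - \<delta>" "cmod z \<le> norm (T x)"
proof -
  obtain x f where x: "z = f (T x)" "norm x = 1" "f \<in> dual_sphere cplx JY" "Re (f (G x)) > 1 - \<delta>"
    using assms unfolding Vrange_approx_def by blast
  have "Re (f (G x)) \<le> norm (G x)"
    using complex_Re_le_cmod[of "f (G x)"] dual_sphere_norm_le[OF x(3), of "G x"] by linarith
  then show ?thesis using that[of x] x dual_sphere_norm_le[OF x(3)] by force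
qed

lemma Vrange_approx_subset_cball:
  assumes "bounded_linear T"
  shows "Vrange_approx cplx JY G T \<delta> \<subseteq> cball 0 (onorm T)"
proof
  fix z assume "z \<in> Vrange_approx cplx JY G T \<delta>"
  then obtain x where "norm x = 1" "cmod z \<le> norm (T x)" by (rule Vrange_approxE)
  then show "z \<in> cball 0 (onorm T)" using onorm[OF assms, of x] by simp
qed

lemma Vrange_subset_cball:
  assumes "bounded_linear T"
  shows "Vrange cplx JY G T \<subseteq> cball 0 (onorm T)"
proof -
  have "closure (Vrange_approx cplx JY G T 1) \<subseteq> cball 0 (onorm T)"
    by (rule closure_minimal[OF Vrange_approx_subset_cball[OF assms] closed_cball])
  then show ?thesis unfolding Vrange_eq_Inter_approx by auto
qed

lemma nradius_upper:
  assumes "bounded_linear T" and "z \<in> Vrange cplx JY G T"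
  shows "cmod z \<le> nradius cplx JY G T"
  unfolding nradius_def
proof (rule cSup_upper)
  show "bdd_above (cmod ` Vrange cplx JY G T)"
    using Vrange_subset_cball[OF assms(1), of cplx JY G] by (intro bdd_aboveI[of _ "onorm T"]) auto
qed (use assms(2) in simp)

lemma Vrange_approx_scaleR:
  "Vrange_approx cplx JY G (\<lambda>x. c *\<^sub>R T x) \<delta> = (*\<^sub>R) c ` Vrange_approx cplx JY G T \<delta>"
proof (intro equalityI subsetI)
  have scale: "f (c *\<^sub>R w) = c *\<^sub>R f w" if "f \<in> dual_sphere cplx JY" for f w
    using dual_sphere_bounded_linear[OF that] by (simp add: linear_simps)
  fix z
  show "z \<in> (*\<^sub>R) c ` Vrange_approx cplx JY G T \<delta>"
    if z_in: "z \<in> Vrange_approx cplx JY G (\<lambda>x. c *\<^sub>R T x) \<delta>"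
  proof -
    obtain x f where z: "z = f (c *\<^sub>R T x)" and x: "norm x = 1" "f \<in> dual_sphere cplx JY"
      "Re (f (G x)) > 1 - \<delta>"
      using z_in unfolding Vrange_approx_def by blast
    then have "f (T x) \<in> Vrange_approx cplx JY G T \<delta>" unfolding Vrange_approx_def by blast
    then show ?thesis unfolding z scale[OF x(2)] by (rule imageI)
  qed
  show "z \<in> Vrange_approx cplx JY G (\<lambda>x. c *\<^sub>R T x) \<delta>"
    if z_in: "z \<in> (*\<^sub>R) c ` Vrange_approx cplx JY G T \<delta>"
  proof -
    obtain x f where z: "z = c *\<^sub>R f (T x)" and x: "norm x = 1" "f \<in> dual_sphere cplx JY"
      "Re (f (G x)) > 1 - \<delta>"
      using z_in unfolding Vrange_approx_def by blast
    then have "z = f (c *\<^sub>R T x)" using scale[OF x(2)] by simp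
    then show ?thesis using x unfolding Vrange_approx_def by blast
  qed
qed

lemma scaleR_Vrange_subset:
  "(*\<^sub>R) c ` Vrange cplx JY G T \<subseteq> Vrange cplx JY G (\<lambda>x. c *\<^sub>R T x)"
  unfolding Vrange_eq_Inter_approx Vrange_approx_scaleR closure_scaleR[symmetric] by blast

lemma exists_unit_norm_gt:
  assumes f: "bounded_linear f" and r: "0 \<le> r" "r < onorm f"
  shows "\<exists>x. norm x = 1 \<and> r < norm (f x)"
proof (rule ccontr)
  assume "\<not> ?thesis"
  then have small: "norm (f x) \<le> r" if "norm x = 1" for x
    using that by (auto simp: not_less)
  have "norm (f x) \<le> r * norm x" for x
  proof (cases "x = 0")
    case False
    have "norm (f (x /\<^sub>R norm x)) \<le> r" using small False by simp
    then show ?thesis using False by (simp add: linear_simps[OF f] field_simps)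
  qed (simp add: linear_simps[OF f])
  then have "onorm f \<le> r" by (rule onorm_bound[OF r(1)])
  then show False using r(2) by simp
qed

context
  fixes cplx and JY :: "'b::real_normed_vector \<Rightarrow> 'b" and G :: "'a::real_normed_vector \<Rightarrow> 'b"
  assumes JY: "scalar_structure cplx JY" and G: "bounded_linear G" "onorm G = 1"
begin

lemma Vrange_approx_nonempty:
  assumes "\<delta> > 0"
  shows "Vrange_approx cplx JY G T \<delta> \<noteq> {}"
proof -
  obtain x where x: "norm x = 1" "max 0 (1 - \<delta>) < norm (G x)"
    using exists_unit_norm_gt[OF G(1), of "max 0 (1 - \<delta>)"] G(2) assms by auto
  then obtain f where "f \<in> dual_sphere cplx JY" "Re (f (G x)) = norm (G x)"
    using exists_norming_functional[OF JY, of "G x"] by force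
  then show ?thesis unfolding Vrange_approx_def using x by force
qed

text \<open>Without this, nradius would be the junk value Sup {}.\<close>

lemma Vrange_nonempty:
  assumes "bounded_linear T"
  shows "Vrange cplx JY G T \<noteq> {}"
  unfolding Vrange_eq_Inter_approx
proof (rule compact_chain)
  let ?F = "(\<lambda>\<delta>. closure (Vrange_approx cplx JY G T \<delta>)) ` {0<..}"
  show "compact S" if "S \<in> ?F" for S
    using that bounded_subset[OF bounded_cball Vrange_approx_subset_cball[OF assms]] by auto
  show "{} \<notin> ?F"
  proof
    assume "{} \<in> ?F"
    then obtain \<delta> where "\<delta> > 0" "{} = closure (Vrange_approx cplx JY G T \<delta>)" by auto
    then show False using Vrange_approx_nonempty[of \<delta> T] by (metis closure_eq_empty)
  qed
  show "S \<subseteq> S' \<or> S' \<subseteq> S" if SS': "S \<in> ?F \<and> S' \<in> ?F" for S S'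
  proof -
    obtain \<delta> \<delta>' where S: "S = closure (Vrange_approx cplx JY G T \<delta>)"
      and S': "S' = closure (Vrange_approx cplx JY G T \<delta>')"
      using SS' by blast
    have "closure (Vrange_approx cplx JY G T a) \<subseteq> closure (Vrange_approx cplx JY G T b)"
      if "a \<le> b" for a b
      using Vrange_approx_mono[OF that] by (rule closure_mono)
    then show ?thesis unfolding S S' by (meson nle_le)
  qed
qed

lemma nradius_nonneg:
  assumes "bounded_linear T"
  shows "0 \<le> nradius cplx JY G T"
proof -
  obtain z where "z \<in> Vrange cplx JY G T" using Vrange_nonempty[OF assms] by blast
  then show ?thesis using nradius_upper[OF assms] norm_ge_zero order_trans by blast
qed

lemma nradius_le_Gnorm:
  assumes T: "bounded_linear T"
  shows "nradius cplx JY G T \<le> Gnorm G T"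
proof -
  have "cmod z \<le> Gnorm G T" if z: "z \<in> Vrange cplx JY G T" for z
    unfolding Gnorm_def
  proof (rule cINF_greatest)
    fix \<delta> :: real assume \<delta>: "\<delta> \<in> {0<..}"
    let ?S = "{x. norm x = 1 \<and> norm (G x) > 1 - \<delta>}"
    have "norm (T x) \<le> onorm T" if "norm x = 1" for x
      using onorm[OF T, of x] that by simp
    then have "bdd_above ((\<lambda>x. norm (T x)) ` ?S)"
      by (intro bdd_aboveI[of _ "onorm T"]) force
    then have "Vrange_approx cplx JY G T \<delta> \<subseteq> cball 0 (SUP x\<in>?S. norm (T x))"
      by (auto elim!: Vrange_approxE intro: cSUP_upper2)
    then have "closure (Vrange_approx cplx JY G T \<delta>) \<subseteq> cball 0 (SUP x\<in>?S. norm (T x))"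
      by (rule closure_minimal) simp
    then show "cmod z \<le> (SUP x\<in>?S. norm (T x))"
      using z \<delta> unfolding Vrange_eq_Inter_approx by auto
  qed simp
  then show ?thesis unfolding nradius_def
    using Vrange_nonempty[OF T] by (intro cSup_least) auto
qed

lemma scaleR_nradius_le:
  assumes T: "bounded_linear T" and c: "0 \<le> c"
  shows "c * nradius cplx JY G T \<le> nradius cplx JY G (\<lambda>x. c *\<^sub>R T x)"
proof (cases "c = 0")
  case True
  then show ?thesis using nradius_nonneg[of "\<lambda>x. 0"] by simp
next
  case False
  have cT: "bounded_linear (\<lambda>x. c *\<^sub>R T x)" by (rule bounded_linear_const_scaleR[OF T])
  have "cmod z \<le> nradius cplx JY G (\<lambda>x. c *\<^sub>R T x) / c" if "z \<in> Vrange cplx JY G T" for z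
  proof -
    have "c *\<^sub>R z \<in> Vrange cplx JY G (\<lambda>x. c *\<^sub>R T x)"
      using scaleR_Vrange_subset that by blast
    then have "cmod (c *\<^sub>R z) \<le> nradius cplx JY G (\<lambda>x. c *\<^sub>R T x)"
      by (rule nradius_upper[OF cT])
    then show ?thesis using c False by (simp add: field_simps)
  qed
  then have "nradius cplx JY G T \<le> nradius cplx JY G (\<lambda>x. c *\<^sub>R T x) / c"
    unfolding nradius_def[of _ _ _ T] using Vrange_nonempty[OF T] by (intro cSup_least) auto
  then show ?thesis using c False by (simp add: field_simps)
qed

end

lemma kop_scaleR:
  assumes "scalar_structure cplx JY" and "kop cplx JX JY T"
  shows "kop cplx JX JY (\<lambda>x. c *\<^sub>R T x)"
  using assms unfolding kop_def scalar_structure_def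
  by (auto intro: bounded_linear_const_scaleR simp: linear_scale)

lemma nG2_mult_Gnorm_le_nradius:
  assumes JY: "scalar_structure cplx JY" and G: "bounded_linear G" "onorm G = 1"
    and norm: "Gnorm_is_norm cplx JX JY G" and T: "kop cplx JX JY T"
  shows "nG2 cplx JX JY G * Gnorm G T \<le> nradius cplx JY G T"
proof (cases "Gnorm G T = 0")
  case True
  then show ?thesis using nradius_nonneg[OF JY G] T by (simp add: kop_def)
next
  case False
  define c where "c = Gnorm G T"
  have c: "c > 0" using False norm T unfolding c_def Gnorm_is_norm_def by force
  define T' where "T' = (\<lambda>x. inverse c *\<^sub>R T x)"
  have T': "kop cplx JX JY T'" "Gnorm G T' = 1"
    using kop_scaleR[OF JY T] norm T c unfolding T'_def c_def Gnorm_is_norm_def by auto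
  have "nG2 cplx JX JY G \<le> nradius cplx JY G T'"
    unfolding nG2_def
  proof (rule cInf_lower)
    show "bdd_below {nradius cplx JY G T | T. kop cplx JX JY T \<and> Gnorm G T = 1}"
      using nradius_nonneg[OF JY G] by (intro bdd_belowI[of _ 0]) (auto simp: kop_def)
  qed (use T' in blast)
  then have "nG2 cplx JX JY G * c \<le> c * nradius cplx JY G T'"
    using c by (simp add: mult.commute)
  also have "\<dots> \<le> nradius cplx JY G (\<lambda>x. c *\<^sub>R T' x)"
    using T'(1) c by (intro scaleR_nradius_le[OF JY G]) (simp_all add: kop_def)
  also have "(\<lambda>x. c *\<^sub>R T' x) = T" using c by (simp add: T'_def)
  finally show ?thesis by (simp add: c_def)
qed

theorem proposition3p5:
  fixes cplx :: bool
    and JX :: "'a::banach \<Rightarrow> 'a" and JY :: "'b::banach \<Rightarrow> 'b"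
    and G :: "'a \<Rightarrow> 'b"
  assumes "scalar_structure cplx JX" and "scalar_structure cplx JY"
    and "kop cplx JX JY G" and "onorm G = 1"
    and "Gnorm_is_norm cplx JX JY G"
    and "nG2 cplx JX JY G = 1"
  shows "nG1 cplx JX JY G = nG cplx JX JY G"
proof -
  have G: "bounded_linear G" using assms(3) by (simp add: kop_def)
  have "nradius cplx JY G T = Gnorm G T" if T: "kop cplx JX JY T" for T
  proof (rule antisym)
    show "nradius cplx JY G T \<le> Gnorm G T"
      using nradius_le_Gnorm[OF assms(2) G assms(4)] T by (simp add: kop_def)
    show "Gnorm G T \<le> nradius cplx JY G T"
      using nG2_mult_Gnorm_le_nradius[OF assms(2) G assms(4,5) T] assms(6) by simp
  qed
  then have "nradius cplx JY G ` {T. kop cplx JX JY T \<and> onorm T = 1} =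
      Gnorm G ` {T. kop cplx JX JY T \<and> onorm T = 1}"
    by (intro image_cong) simp_all
  then show ?thesis unfolding nG1_def nG_def image_Collect by (simp only:)
qed

end
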